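(* There exists an absolute constant $C_2>0$ such that for every $\delta_0>0$ the following holds: if $\|\mathcal T-\mathcal S\|_{\mathrm{op}}<\delta_0$, then for all $x^+\in\mathbb R^{2n}$ and all nonzero $u\in\mathbb R^{2n}$, $$\big|u^TH_f(x^+)u-u^TH_g(x^+)u\big|<C_2\delta_0c\,\|u\|^2(\|x\|+\|x^\natural\|)^2,$$ where $H_f,H_g$ denote the Hessians of $f,g$ with respect to $x^+$.
   Context: Let $n,m\ge 1$, $a_1,\dots,a_m\in\mathbb C^n$ and $x^\natural\in\mathbb C^n$ with $x^\natural\neq 0$. For $a,b\in\mathbb C^n$ write $\langle a,b\rangle=\sum_{j}a_j\overline{b_j}$ and let $\|\cdot\|$ be the Euclidean norm. Let $y_i=|\langle a_i,x^\natural\rangle|^2$. For $v\in\mathbb C^n$ put $v^+=(\mathrm{Re}\,v,\mathrm{Im}\,v)\in\mathbb R^{2n}$ and $v^-=(-\mathrm{Im}\,v,\mathrm{Re}\,v)$; $x$ and $x^+$ always correspond. Define $f:\mathbb R^{2n}\to\mathbb R$ by $f(x^+)=\sum_{i=1}^m\big(|\langle a_i,x\rangle|^2-y_i\big)^2$. Fix $\sigma>0$ (in the paper, $\sigma^2=\mathrm{Var}((a_i^+)_1)$ for random measurement vectors), set $c=m\sigma^4$, and define $g(x^+)=8c\left(\|x\|^4+\|x^\natural\|^4-|\langle x,x^\natural\rangle|^2-\|x\|^2\|x^\natural\|^2\right)$. Define the order-4 tensors on $\mathbb R^{2n}$: $\mathcal T=\frac1c\sum_{i=1}^m(a_i^+)^{\otimes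 4}$ and $\mathcal S_{i_1i_2i_3i_4}=\mathbf 1_{i_1=i_2,\,i_3=i_4}+\mathbf 1_{i_1=i_3,\,i_2=i_4}+\mathbf 1_{i_1=i_4,\,i_2=i_3}$, and $\|\mathcal R\|_{\mathrm{op}}=\sup\{\langle \mathcal R,u_1\otimes u_2\otimes u_3\otimes u_4\rangle:\ u_j\in\mathbb R^{2n},\ \|u_1\|\|u_2\|\|u_3\|\|u_4\|=1\}$ (tensor inner product = sum of entrywise products). *)

theory Defs
  imports "HOL-Analysis.Analysis"
begin

text \<open>Dimensions are explicit natural numbers: a vector in C^n is a function
  nat \<Rightarrow> complex of which only the entries with index < n matter; a vector in
  R^(2n) is a function nat \<Rightarrow> real of which only the entries with index < 2n matter.
  The measurement vectors are a :: nat \<Rightarrow> nat \<Rightarrow> complex, a i being a_(i+1).\<close>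

definition cinner :: "nat \<Rightarrow> (nat \<Rightarrow> complex) \<Rightarrow> (nat \<Rightarrow> complex) \<Rightarrow> complex" where
  "cinner n v w = (\<Sum>j<n. v j * cnj (w j))"

definition cnorm :: "nat \<Rightarrow> (nat \<Rightarrow> complex) \<Rightarrow> real" where
  "cnorm n v = sqrt (\<Sum>j<n. (cmod (v j))\<^sup>2)"

definition rnorm :: "nat \<Rightarrow> (nat \<Rightarrow> real) \<Rightarrow> real" where
  "rnorm N u = sqrt (\<Sum>k<N. (u k)\<^sup>2)"

definition plusv :: "nat \<Rightarrow> (nat \<Rightarrow> complex) \<Rightarrow> nat \<Rightarrow> real" where
  "plusv n v = (\<lambda>k. if k < n then Re (v k) else if k < 2*n then Im (v (k - n)) else 0)"

definition ofplus :: "nat \<Rightarrow> (nat \<Rightarrow> real) \<Rightarrow> nat \<Rightarrow> complex" where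
  "ofplus n xp = (\<lambda>j. Complex (xp j) (xp (n + j)))"

definition f_obj :: "nat \<Rightarrow> nat \<Rightarrow> (nat \<Rightarrow> nat \<Rightarrow> complex) \<Rightarrow> (nat \<Rightarrow> complex)
    \<Rightarrow> (nat \<Rightarrow> real) \<Rightarrow> real" where
  "f_obj n m a xn xp =
     (\<Sum>i<m. ((cmod (cinner n (a i) (ofplus n xp)))\<^sup>2 - (cmod (cinner n (a i) xn))\<^sup>2)\<^sup>2)"

definition c_const :: "nat \<Rightarrow> real \<Rightarrow> real" where
  "c_const m \<sigma> = real m * \<sigma> ^ 4"

definition g_obj :: "nat \<Rightarrow> nat \<Rightarrow> real \<Rightarrow> (nat \<Rightarrow> complex) \<Rightarrow> (nat \<Rightarrow> real) \<Rightarrow> real" where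
  "g_obj n m \<sigma> xn xp =
     8 * c_const m \<sigma> * ((cnorm n (ofplus n xp)) ^ 4 + (cnorm n xn) ^ 4
        - (cmod (cinner n (ofplus n xp) xn))\<^sup>2 - (cnorm n (ofplus n xp))\<^sup>2 * (cnorm n xn)\<^sup>2)"

definition partial :: "((nat \<Rightarrow> real) \<Rightarrow> real) \<Rightarrow> (nat \<Rightarrow> real) \<Rightarrow> nat \<Rightarrow> real" where
  "partial F x k = deriv (\<lambda>t. F (x(k := x k + t))) 0"

definition hessian :: "((nat \<Rightarrow> real) \<Rightarrow> real) \<Rightarrow> (nat \<Rightarrow> real) \<Rightarrow> nat \<Rightarrow> nat \<Rightarrow> real" where
  "hessian F x k l = partial (\<lambda>y. partial F y l) x k"

definition hess_quad :: "nat \<Rightarrow> ((nat \<Rightarrow> real) \<Rightarrow> real) \<Rightarrow> (nat \<Rightarrow> real) \<Rightarrow> (nat \<Rightarrow> real) \<Rightarrow> real" where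
  "hess_quad N F x u = (\<Sum>k<N. \<Sum>l<N. u k * hessian F x k l * u l)"

type_synonym tensor4 = "nat \<Rightarrow> nat \<Rightarrow> nat \<Rightarrow> nat \<Rightarrow> real"

definition T_tensor :: "nat \<Rightarrow> nat \<Rightarrow> (nat \<Rightarrow> nat \<Rightarrow> complex) \<Rightarrow> real \<Rightarrow> tensor4" where
  "T_tensor n m a \<sigma> = (\<lambda>i1 i2 i3 i4. (1 / c_const m \<sigma>) *
     (\<Sum>i<m. plusv n (a i) i1 * plusv n (a i) i2 * plusv n (a i) i3 * plusv n (a i) i4))"

definition S_tensor :: tensor4 where
  "S_tensor = (\<lambda>i1 i2 i3 i4.
     (if i1 = i2 \<and> i3 = i4 then 1 else 0) + (if i1 = i3 \<and> i2 = i4 then 1 else 0)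
     + (if i1 = i4 \<and> i2 = i3 then 1 else 0))"

definition tensor_apply :: "nat \<Rightarrow> tensor4 \<Rightarrow> (nat \<Rightarrow> real) \<Rightarrow> (nat \<Rightarrow> real)
    \<Rightarrow> (nat \<Rightarrow> real) \<Rightarrow> (nat \<Rightarrow> real) \<Rightarrow> real" where
  "tensor_apply N R u1 u2 u3 u4 =
     (\<Sum>i1<N. \<Sum>i2<N. \<Sum>i3<N. \<Sum>i4<N. R i1 i2 i3 i4 * u1 i1 * u2 i2 * u3 i3 * u4 i4)"

definition tensor_opnorm :: "nat \<Rightarrow> tensor4 \<Rightarrow> real" where
  "tensor_opnorm N R = Sup {tensor_apply N R u1 u2 u3 u4 | u1 u2 u3 u4.
     rnorm N u1 * rnorm N u2 * rnorm N u3 * rnorm N u4 = 1}"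

end

theory Submission
  imports Defs
begin

text \<open>Write v' for rot n v, the real coordinates of i v, and z for the real coordinates of
  x\<natural>. Since |<a, x>|^2 = (a . x)^2 + (a . x')^2 in real coordinates, differentiating twice turns
  u^T H_f(x) u into a fixed linear combination (hess_form) of nine values c T(v1, v2, w1, w2) with
  v1, v2 among x, x', z, z' and w1, w2 among u, u'. The same computation for g gives the same
  combination of values of c S. Hence the difference is c hess_form(T - S), whose terms are each
  bounded by ||T - S||_op ||u||^2 (||x|| + ||z||)^2, with total weight 64.\<close>

definition dot :: "nat \<Rightarrow> (nat \<Rightarrow> real) \<Rightarrow> (nat \<Rightarrow> real) \<Rightarrow> real" where
  "dot N p y = (\<Sum>k<N. p k * y k)"

(* rot n v\<^sup>+ = v\<^sup>-, i.e. multiplication by the imaginary unit in real coordinates. *)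
definition rot :: "nat \<Rightarrow> (nat \<Rightarrow> real) \<Rightarrow> nat \<Rightarrow> real" where
  "rot n v = (\<lambda>k. if k < n then - v (n + k) else if k < 2*n then v (k - n) else 0)"

lemma sum_lessThan_double:
  fixes g :: "nat \<Rightarrow> 'a::comm_monoid_add"
  shows "(\<Sum>k<2*n. g k) = (\<Sum>j<n. g j) + (\<Sum>j<n. g (n + j))"
proof -
  have "(\<Sum>k<2*n. g k) = (\<Sum>k<n. g k) + (\<Sum>k=0+n..<n+n. g k)"
    by (simp add: mult_2 lessThan_atLeast0 sum.atLeastLessThan_concat)
  then show ?thesis
    by (simp only: sum.atLeastLessThan_shift_bounds) (simp add: lessThan_atLeast0 comp_def)
qed

lemma dot_double: "dot (2*n) p y = (\<Sum>j<n. p j * y j + p (n + j) * y (n + j))"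
  by (simp add: dot_def sum_lessThan_double sum.distrib)

lemma rot_lower [simp]: "j < n \<Longrightarrow> rot n v j = - v (n + j)"
  and rot_upper [simp]: "j < n \<Longrightarrow> rot n v (n + j) = v j"
  by (simp_all add: rot_def)

lemma dot_rot_rot [simp]: "dot (2*n) (rot n p) (rot n y) = dot (2*n) p y"
  unfolding dot_double by (rule sum.cong) simp_all

lemma dot_rot_left: "dot (2*n) (rot n p) y = - dot (2*n) p (rot n y)"
  by (simp add: dot_double sum_negf[symmetric])

lemma dot_rot_rot_right: "dot (2*n) p (rot n (rot n y)) = - dot (2*n) p y"
  by (simp add: dot_double sum_negf[symmetric])

lemma dot_rot_self [simp]: "dot (2*n) y (rot n y) = 0"
  by (simp add: dot_double)

lemma dot_lincomb_left: "dot N (\<lambda>k. a * p k + b * q k) u = a * dot N p u + b * dot N q u"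
  by (simp add: dot_def sum.distrib sum_distrib_left algebra_simps)

lemma dot_update: "k < N \<Longrightarrow> dot N p (y(k := y k + t)) = dot N p y + p k * t"
  by (simp add: dot_def sum.remove[of "{..<N}" k] algebra_simps)

lemma dot_self_update:
  "k < N \<Longrightarrow> dot N (y(k := y k + t)) (y(k := y k + t)) = dot N y y + 2 * y k * t + t\<^sup>2"
  by (simp add: dot_def sum.remove[of "{..<N}" k] algebra_simps power2_eq_square)

lemma rnorm_nonneg: "rnorm N u \<ge> 0"
  by (simp add: rnorm_def sum_nonneg)

lemma rnorm_sq: "(rnorm N u)\<^sup>2 = dot N u u"
  by (simp add: rnorm_def dot_def sum_nonneg power2_eq_square)

lemma rnorm_rot [simp]: "rnorm (2*n) (rot n u) = rnorm (2*n) u"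
  by (simp add: rnorm_def power2_eq_square flip: dot_def)

lemma rnorm_scale: "rnorm N (\<lambda>k. a * v k) = \<bar>a\<bar> * rnorm N v"
  by (simp add: rnorm_def power_mult_distrib sum_distrib_left[symmetric] real_sqrt_mult)

lemma rnorm_eq_0_iff: "rnorm N v = 0 \<longleftrightarrow> (\<forall>k<N. v k = 0)"
  by (auto simp: rnorm_def sum_nonneg_eq_0_iff)

lemma rnorm_pos: "\<exists>k<N. u k \<noteq> 0 \<Longrightarrow> rnorm N u > 0"
  using rnorm_nonneg[of N u] rnorm_eq_0_iff[of N u] by auto

lemma abs_le_rnorm:
  assumes "k < N"
  shows "\<bar>v k\<bar> \<le> rnorm N v"
proof -
  have "(v k)\<^sup>2 \<le> (\<Sum>j<N. (v j)\<^sup>2)"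
    using assms by (intro member_le_sum) auto
  then show ?thesis
    unfolding rnorm_def by (metis real_sqrt_abs real_sqrt_le_mono)
qed

lemma Re_cinner_ofplus: "Re (cinner n b (ofplus n y)) = dot (2*n) (plusv n b) y"
  by (simp add: cinner_def dot_double plusv_def ofplus_def)

lemma Im_cinner_ofplus: "Im (cinner n b (ofplus n y)) = - dot (2*n) (rot n (plusv n b)) y"
  by (simp add: cinner_def dot_double plusv_def ofplus_def sum_negf[symmetric])

lemma cmod_cinner_ofplus_sq:
  "(cmod (cinner n b (ofplus n y)))\<^sup>2 = (dot (2*n) (plusv n b) y)\<^sup>2 + (dot (2*n) (rot n (plusv n b)) y)\<^sup>2"
  by (simp add: cmod_power2 Re_cinner_ofplus Im_cinner_ofplus)

lemma cmod_cinner_commute: "cmod (cinner n v w) = cmod (cinner n w v)"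
proof -
  have "cinner n v w = cnj (cinner n w v)" by (simp add: cinner_def mult.commute)
  then show ?thesis by simp
qed

lemma cnorm_ofplus: "cnorm n (ofplus n y) = rnorm (2*n) y"
  by (simp add: cnorm_def rnorm_def sum_lessThan_double ofplus_def cmod_power2 sum.distrib)

lemma cnorm_pos: "\<exists>j<n. v j \<noteq> 0 \<Longrightarrow> cnorm n v > 0"
  by (auto simp: cnorm_def intro!: sum_pos2)

lemma ofplus_plusv: "j < n \<Longrightarrow> ofplus n (plusv n v) j = v j"
  by (simp add: ofplus_def plusv_def complex_eq_iff)

lemma cinner_ofplus_plusv: "cinner n b (ofplus n (plusv n v)) = cinner n b v"
  unfolding cinner_def by (rule sum.cong) (simp_all add: ofplus_plusv)

lemma cnorm_ofplus_plusv: "cnorm n (ofplus n (plusv n v)) = cnorm n v"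
  unfolding cnorm_def by (rule arg_cong[where f = sqrt], rule sum.cong) (simp_all add: ofplus_plusv)

lemma partial_eqI: "((\<lambda>t. F (y(k := y k + t))) has_real_derivative D) (at 0) \<Longrightarrow> partial F y k = D"
  by (simp add: partial_def DERIV_imp_deriv)

lemma fun_upd_add_apply: "((y :: 'a \<Rightarrow> 'b::monoid_add)(k := y k + t)) l = y l + (if k = l then t else 0)"
  by auto

lemma quadratic_form_rank_one: "(\<Sum>k<N. \<Sum>l<N. u k * (a k * b l) * u l) = dot N a u * dot N b u"
  by (simp add: dot_def sum_product mult_ac)

lemma quadratic_form_identity: "(\<Sum>k<N. \<Sum>l<N. u k * (if k = l then 1 else 0) * u l) = dot N u u"
  by (simp add: dot_def if_distrib if_distribR cong: if_cong)

definition residual_loss :: "nat \<Rightarrow> nat \<Rightarrow> (nat \<Rightarrow> nat \<Rightarrow> real) \<Rightarrow> (nat \<Rightarrow> nat \<Rightarrow> real)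
    \<Rightarrow> (nat \<Rightarrow> real) \<Rightarrow> (nat \<Rightarrow> real) \<Rightarrow> real" where
  "residual_loss N m p q w x = (\<Sum>i<m. ((dot N (p i) x)\<^sup>2 + (dot N (q i) x)\<^sup>2 - w i)\<^sup>2)"

lemma partial_residual_loss:
  assumes "k < N"
  shows "partial (residual_loss N m p q w) x k = (\<Sum>i<m. 4 * ((dot N (p i) x)\<^sup>2 + (dot N (q i) x)\<^sup>2 - w i)
           * (dot N (p i) x * p i k + dot N (q i) x * q i k))"
  by (rule partial_eqI, unfold residual_loss_def dot_update[OF assms], rule DERIV_sum)
    (auto intro!: derivative_eq_intros simp: algebra_simps power2_eq_square)

lemma hessian_residual_loss:
  assumes "k < N" and "l < N"
  shows "hessian (residual_loss N m p q w) x k l =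
    (\<Sum>i<m. 8 * (dot N (p i) x * p i k + dot N (q i) x * q i k) * (dot N (p i) x * p i l + dot N (q i) x * q i l)
       + 4 * ((dot N (p i) x)\<^sup>2 + (dot N (q i) x)\<^sup>2 - w i) * (p i k * p i l + q i k * q i l))"
  unfolding hessian_def partial_residual_loss[OF assms(2)]
  by (rule partial_eqI, unfold dot_update[OF assms(1)], rule DERIV_sum)
    (auto intro!: derivative_eq_intros simp: algebra_simps power2_eq_square)

lemma hess_quad_residual_loss:
  "hess_quad N (residual_loss N m p q w) x u =
    (\<Sum>i<m. 8 * (dot N (p i) x * dot N (p i) u + dot N (q i) x * dot N (q i) u)\<^sup>2
       + 4 * ((dot N (p i) x)\<^sup>2 + (dot N (q i) x)\<^sup>2 - w i) * ((dot N (p i) u)\<^sup>2 + (dot N (q i) u)\<^sup>2))"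
proof -
  define r where "r i = (\<lambda>k. dot N (p i) x * p i k + dot N (q i) x * q i k)" for i
  define s where "s i = (dot N (p i) x)\<^sup>2 + (dot N (q i) x)\<^sup>2 - w i" for i
  have "hess_quad N (residual_loss N m p q w) x u = (\<Sum>k<N. \<Sum>l<N. \<Sum>i<m.
      8 * (u k * (r i k * r i l) * u l) + 4 * s i * (u k * (p i k * p i l) * u l) + 4 * s i * (u k * (q i k * q i l) * u l))"
    unfolding hess_quad_def
    by (intro sum.cong refl) (simp add: hessian_residual_loss r_def s_def sum_distrib_left sum_distrib_right algebra_simps)
  also have "\<dots> = (\<Sum>i<m. \<Sum>k<N. \<Sum>l<N.
      8 * (u k * (r i k * r i l) * u l) + 4 * s i * (u k * (p i k * p i l) * u l) + 4 * s i * (u k * (q i k * q i l) * u l))"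
    by (simp only: sum.swap[of _ "{..<m}"])
  also have "\<dots> = (\<Sum>i<m. 8 * (dot N (r i) u)\<^sup>2 + 4 * s i * (dot N (p i) u)\<^sup>2 + 4 * s i * (dot N (q i) u)\<^sup>2)"
    by (simp only: sum.distrib sum_distrib_left[symmetric] quadratic_form_rank_one power2_eq_square)
  finally show ?thesis
    unfolding r_def s_def dot_lincomb_left by (simp add: algebra_simps)
qed

definition quartic_norm_loss :: "nat \<Rightarrow> real \<Rightarrow> (nat \<Rightarrow> real) \<Rightarrow> (nat \<Rightarrow> real) \<Rightarrow> real
    \<Rightarrow> (nat \<Rightarrow> real) \<Rightarrow> real" where
  "quartic_norm_loss N K z w \<zeta> x =
     K * ((dot N x x)\<^sup>2 + \<zeta>\<^sup>2 - (dot N z x)\<^sup>2 - (dot N w x)\<^sup>2 - \<zeta> * dot N x x)"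

lemma partial_quartic_norm_loss:
  assumes "k < N"
  shows "partial (quartic_norm_loss N K z w \<zeta>) x k =
    K * (4 * dot N x x * x k - 2 * dot N z x * z k - 2 * dot N w x * w k - 2 * \<zeta> * x k)"
  by (rule partial_eqI, unfold quartic_norm_loss_def dot_self_update[OF assms], unfold dot_update[OF assms])
    (auto intro!: derivative_eq_intros simp: algebra_simps power2_eq_square)

lemma hessian_quartic_norm_loss:
  assumes "k < N" and "l < N"
  shows "hessian (quartic_norm_loss N K z w \<zeta>) x k l =
    K * (8 * (x k * x l) - 2 * (z k * z l) - 2 * (w k * w l) + (4 * dot N x x - 2 * \<zeta>) * (if k = l then 1 else 0))"
  unfolding hessian_def partial_quartic_norm_loss[OF assms(2)]
  by (rule partial_eqI, unfold dot_self_update[OF assms(1)], unfold dot_update[OF assms(1)] fun_upd_add_apply)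
    (auto intro!: derivative_eq_intros simp: algebra_simps power2_eq_square)

lemma hess_quad_quartic_norm_loss:
  "hess_quad N (quartic_norm_loss N K z w \<zeta>) x u =
    K * (8 * (dot N x u)\<^sup>2 - 2 * (dot N z u)\<^sup>2 - 2 * (dot N w u)\<^sup>2 + (4 * dot N x x - 2 * \<zeta>) * dot N u u)"
proof -
  have "hess_quad N (quartic_norm_loss N K z w \<zeta>) x u = (\<Sum>k<N. \<Sum>l<N.
      K * (8 * (u k * (x k * x l) * u l) - 2 * (u k * (z k * z l) * u l) - 2 * (u k * (w k * w l) * u l)
        + (4 * dot N x x - 2 * \<zeta>) * (u k * (if k = l then 1 else 0) * u l)))"
    unfolding hess_quad_def by (intro sum.cong refl) (simp add: hessian_quartic_norm_loss algebra_simps)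
  also have "\<dots> = K * (8 * (dot N x u)\<^sup>2 - 2 * (dot N z u)\<^sup>2 - 2 * (dot N w u)\<^sup>2 + (4 * dot N x x - 2 * \<zeta>) * dot N u u)"
    by (simp only: sum.distrib sum_subtractf sum_distrib_left[symmetric] quadratic_form_rank_one quadratic_form_identity
        power2_eq_square)
  finally show ?thesis .
qed

lemma tensor_apply_add: "tensor_apply N (\<lambda>i1 i2 i3 i4. R i1 i2 i3 i4 + R' i1 i2 i3 i4) v1 v2 v3 v4
   = tensor_apply N R v1 v2 v3 v4 + tensor_apply N R' v1 v2 v3 v4"
  by (simp add: tensor_apply_def algebra_simps sum.distrib)

lemma tensor_apply_diff: "tensor_apply N (\<lambda>i1 i2 i3 i4. R i1 i2 i3 i4 - R' i1 i2 i3 i4) v1 v2 v3 v4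
   = tensor_apply N R v1 v2 v3 v4 - tensor_apply N R' v1 v2 v3 v4"
  by (simp add: tensor_apply_def algebra_simps sum_subtractf)

lemma tensor_apply_scale: "tensor_apply N (\<lambda>i1 i2 i3 i4. K * R i1 i2 i3 i4) v1 v2 v3 v4
   = K * tensor_apply N R v1 v2 v3 v4"
  by (simp add: tensor_apply_def sum_distrib_left mult_ac)

lemma tensor_apply_sum: "tensor_apply N (\<lambda>i1 i2 i3 i4. \<Sum>i\<in>I. R i i1 i2 i3 i4) v1 v2 v3 v4
   = (\<Sum>i\<in>I. tensor_apply N (R i) v1 v2 v3 v4)"
  unfolding tensor_apply_def by (simp add: sum_distrib_right) (simp only: sum.swap[of _ I])

lemma tensor_apply_product: "tensor_apply N (\<lambda>i1 i2 i3 i4. f1 i1 * f2 i2 * f3 i3 * f4 i4) v1 v2 v3 v4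
   = dot N f1 v1 * dot N f2 v2 * dot N f3 v3 * dot N f4 v4"
proof -
  have "tensor_apply N (\<lambda>i1 i2 i3 i4. f1 i1 * f2 i2 * f3 i3 * f4 i4) v1 v2 v3 v4
    = (\<Sum>i1<N. \<Sum>i2<N. \<Sum>i3<N. \<Sum>i4<N. (f1 i1 * v1 i1) * (f2 i2 * v2 i2) * (f3 i3 * v3 i3) * (f4 i4 * v4 i4))"
    by (simp add: tensor_apply_def mult_ac)
  then show ?thesis
    by (simp only: sum_distrib_left[symmetric] sum_distrib_right[symmetric] dot_def)
qed

lemma tensor_apply_homogeneous:
  "tensor_apply N R (\<lambda>k. a1 * v1 k) (\<lambda>k. a2 * v2 k) (\<lambda>k. a3 * v3 k) (\<lambda>k. a4 * v4 k)
   = a1 * a2 * a3 * a4 * tensor_apply N R v1 v2 v3 v4"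
  by (simp add: tensor_apply_def sum_distrib_left mult_ac)

lemma tensor_apply_S_tensor:
  "tensor_apply N S_tensor a b c d = dot N a b * dot N c d + dot N a c * dot N b d + dot N a d * dot N b c"
proof -
  have if_zero_mult: "(if P then x else 0) * y = (if P then x * y else 0)" for P and x y :: real
    by simp
  have sum_if_const: "(\<Sum>i<N. if P then f i else 0) = (if P then \<Sum>i<N. f i else 0)" for P and f :: "nat \<Rightarrow> real"
    by simp
  have sum_if_conj: "j < N \<Longrightarrow> (\<Sum>i<N. if P \<and> j = i then f i else 0) = (if P then f j else (0::real))"
    "j < N \<Longrightarrow> (\<Sum>i<N. if j = i \<and> P then f i else 0) = (if P then f j else (0::real))" for P j f
    by (auto simp: sum.If_cases)
  show ?thesis
    unfolding S_tensor_def tensor_apply_add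
    by (simp only: tensor_apply_def if_zero_mult) (simp add: sum_if_conj sum_if_const dot_def sum_product mult_ac)
qed

lemma tensor_apply_T_tensor:
  assumes "c_const m \<sigma> \<noteq> 0"
  shows "c_const m \<sigma> * tensor_apply (2*n) (T_tensor n m a \<sigma>) v1 v2 v3 v4
    = (\<Sum>i<m. dot (2*n) (plusv n (a i)) v1 * dot (2*n) (plusv n (a i)) v2
        * dot (2*n) (plusv n (a i)) v3 * dot (2*n) (plusv n (a i)) v4)"
  using assms unfolding T_tensor_def tensor_apply_scale tensor_apply_sum tensor_apply_product by simp

lemma abs_tensor_apply_le_entrywise:
  "\<bar>tensor_apply N R v1 v2 v3 v4\<bar> \<le>
     (\<Sum>i1<N. \<Sum>i2<N. \<Sum>i3<N. \<Sum>i4<N. \<bar>R i1 i2 i3 i4\<bar>) * (rnorm N v1 * rnorm N v2 * rnorm N v3 * rnorm N v4)"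
proof -
  have "\<bar>R i1 i2 i3 i4 * v1 i1 * v2 i2 * v3 i3 * v4 i4\<bar>
      \<le> \<bar>R i1 i2 i3 i4\<bar> * (rnorm N v1 * rnorm N v2 * rnorm N v3 * rnorm N v4)"
    if "i1 < N" "i2 < N" "i3 < N" "i4 < N" for i1 i2 i3 i4
    using that unfolding abs_mult mult.assoc
    by (intro mult_left_mono mult_mono abs_le_rnorm) (simp_all add: rnorm_nonneg)
  then show ?thesis
    unfolding tensor_apply_def sum_distrib_right
    by (intro order_trans[OF sum_abs] sum_mono) simp
qed

lemma tensor_apply_le_opnorm:
  assumes "rnorm N u1 * rnorm N u2 * rnorm N u3 * rnorm N u4 = 1"
  shows "tensor_apply N R u1 u2 u3 u4 \<le> tensor_opnorm N R"
  unfolding tensor_opnorm_def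
proof (rule cSup_upper)
  show "tensor_apply N R u1 u2 u3 u4 \<in> {tensor_apply N R u1 u2 u3 u4 | u1 u2 u3 u4.
      rnorm N u1 * rnorm N u2 * rnorm N u3 * rnorm N u4 = 1}"
    using assms by blast
  show "bdd_above {tensor_apply N R u1 u2 u3 u4 | u1 u2 u3 u4.
      rnorm N u1 * rnorm N u2 * rnorm N u3 * rnorm N u4 = 1}"
  proof
    fix s assume "s \<in> {tensor_apply N R u1 u2 u3 u4 | u1 u2 u3 u4.
      rnorm N u1 * rnorm N u2 * rnorm N u3 * rnorm N u4 = 1}"
    then obtain v1 v2 v3 v4 where "s = tensor_apply N R v1 v2 v3 v4"
      and "rnorm N v1 * rnorm N v2 * rnorm N v3 * rnorm N v4 = 1"
      by blast
    then show "s \<le> (\<Sum>i1<N. \<Sum>i2<N. \<Sum>i3<N. \<Sum>i4<N. \<bar>R i1 i2 i3 i4\<bar>)"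
      using abs_tensor_apply_le_entrywise[of N R v1 v2 v3 v4] by simp
  qed
qed

lemma abs_tensor_apply_le_opnorm:
  "\<bar>tensor_apply N R v1 v2 v3 v4\<bar> \<le> tensor_opnorm N R * (rnorm N v1 * rnorm N v2 * rnorm N v3 * rnorm N v4)"
proof (cases "rnorm N v1 * rnorm N v2 * rnorm N v3 * rnorm N v4 = 0")
  case True
  then have "tensor_apply N R v1 v2 v3 v4 = 0"
    by (auto simp: rnorm_eq_0_iff tensor_apply_def)
  with True show ?thesis by (metis abs_zero mult_zero_right order_refl)
next
  case False
  define r1 r2 r3 r4 where "r1 = rnorm N v1" and "r2 = rnorm N v2" and "r3 = rnorm N v3" and "r4 = rnorm N v4"
  have pos: "r1 > 0" "r2 > 0" "r3 > 0" "r4 > 0"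
    using False rnorm_nonneg[of N] by (auto simp: r1_def r2_def r3_def r4_def less_le)
  have "e * tensor_apply N R v1 v2 v3 v4 / (r1 * r2 * r3 * r4) \<le> tensor_opnorm N R" if "\<bar>e\<bar> = 1" for e
  proof -
    have "e * tensor_apply N R v1 v2 v3 v4 / (r1 * r2 * r3 * r4) = tensor_apply N R
        (\<lambda>k. e / r1 * v1 k) (\<lambda>k. 1 / r2 * v2 k) (\<lambda>k. 1 / r3 * v3 k) (\<lambda>k. 1 / r4 * v4 k)"
      unfolding tensor_apply_homogeneous by simp
    also have "\<dots> \<le> tensor_opnorm N R"
      by (rule tensor_apply_le_opnorm, unfold rnorm_scale)
        (use pos that in \<open>simp add: abs_div flip: r1_def r2_def r3_def r4_def\<close>)
    finally show ?thesis .
  qed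
  from this[of 1] this[of "-1"] have "\<bar>tensor_apply N R v1 v2 v3 v4\<bar> / (r1 * r2 * r3 * r4) \<le> tensor_opnorm N R"
    by (simp add: abs_if)
  with pos show ?thesis
    by (simp add: divide_le_eq r1_def r2_def r3_def r4_def mult_ac)
qed

(* For N = 0 the set whose Sup defines tensor_opnorm is empty. *)
lemma tensor_opnorm_nonneg:
  assumes "N > 0"
  shows "tensor_opnorm N R \<ge> 0"
proof -
  define e :: "nat \<Rightarrow> real" where "e = (\<lambda>k. if k = 0 then 1 else 0)"
  have "(\<Sum>k<N. (e k)\<^sup>2) = (\<Sum>k<N. if k = 0 then 1 else 0)"
    by (rule sum.cong) (simp_all add: e_def)
  then have "rnorm N e = 1"
    using assms by (simp add: rnorm_def)
  then show ?thesis
    using abs_tensor_apply_le_opnorm[of N R e e e e] by simp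
qed

(* For F = p\<^sup>\<otimes>\<^sup>4 with p = a\<^sup>+ this is the contribution of the measurement a to u\<^sup>T H_f u. *)
definition hess_form :: "nat \<Rightarrow> ((nat \<Rightarrow> real) \<Rightarrow> (nat \<Rightarrow> real) \<Rightarrow> (nat \<Rightarrow> real) \<Rightarrow> (nat \<Rightarrow> real) \<Rightarrow> real)
    \<Rightarrow> (nat \<Rightarrow> real) \<Rightarrow> (nat \<Rightarrow> real) \<Rightarrow> (nat \<Rightarrow> real) \<Rightarrow> real" where
  "hess_form n F x u z = (let x' = rot n x; u' = rot n u; z' = rot n z in
     8 * (F x x u u + 2 * F x x' u u' + F x' x' u' u')
     + 4 * (F x x u u + F x' x' u u + F x x u' u' + F x' x' u' u'
            - F z z u u - F z' z' u u - F z z u' u' - F z' z' u' u'))"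

lemma hess_form_sum:
  "hess_form n (\<lambda>v1 v2 v3 v4. \<Sum>i\<in>I. F i v1 v2 v3 v4) x u z = (\<Sum>i\<in>I. hess_form n (F i) x u z)"
  by (simp add: hess_form_def Let_def sum.distrib sum_subtractf sum_negf flip: sum_distrib_left)

lemma hess_form_scale:
  "hess_form n (\<lambda>v1 v2 v3 v4. K * F v1 v2 v3 v4) x u z = K * hess_form n F x u z"
  by (simp add: hess_form_def Let_def algebra_simps)

lemma hess_form_diff:
  "hess_form n (\<lambda>v1 v2 v3 v4. F v1 v2 v3 v4 - G v1 v2 v3 v4) x u z = hess_form n F x u z - hess_form n G x u z"
  by (simp add: hess_form_def Let_def algebra_simps)

lemma abs_hess_form_le:
  assumes F: "\<And>v1 v2 v3 v4. \<bar>F v1 v2 v3 v4\<bar> \<le> K * (rnorm (2*n) v1 * rnorm (2*n) v2 * rnorm (2*n) v3 * rnorm (2*n) v4)"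
    and "K \<ge> 0"
  shows "\<bar>hess_form n F x u z\<bar> \<le> 64 * K * (rnorm (2*n) u)\<^sup>2 * (rnorm (2*n) x + rnorm (2*n) z)\<^sup>2"
proof -
  define M where "M = rnorm (2*n) x + rnorm (2*n) z"
  have term_le: "\<bar>F v1 v2 w1 w2\<bar> \<le> K * (rnorm (2*n) u)\<^sup>2 * M\<^sup>2"
    if "v1 \<in> {x, rot n x, z, rot n z}" "v2 \<in> {x, rot n x, z, rot n z}" "w1 \<in> {u, rot n u}" "w2 \<in> {u, rot n u}"
    for v1 v2 w1 w2
  proof -
    have v: "rnorm (2*n) v1 * rnorm (2*n) v2 \<le> M * M"
      using that(1,2) by (intro mult_mono) (auto simp: M_def rnorm_nonneg)
    have w: "rnorm (2*n) w1 = rnorm (2*n) u" "rnorm (2*n) w2 = rnorm (2*n) u"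
      using that(3,4) by auto
    have "K * (rnorm (2*n) v1 * rnorm (2*n) v2 * rnorm (2*n) w1 * rnorm (2*n) w2)
        \<le> K * (M * M * rnorm (2*n) u * rnorm (2*n) u)"
      unfolding w using \<open>K \<ge> 0\<close> v by (intro mult_left_mono mult_right_mono) (auto simp: rnorm_nonneg)
    then show ?thesis
      using F[of v1 v2 w1 w2] by (simp add: power2_eq_square mult_ac)
  qed
  show ?thesis
    unfolding hess_form_def Let_def M_def[symmetric]
    using term_le[of x x u u] term_le[of x "rot n x" u "rot n u"] term_le[of "rot n x" "rot n x" "rot n u" "rot n u"]
      term_le[of "rot n x" "rot n x" u u] term_le[of x x "rot n u" "rot n u"]
      term_le[of z z u u] term_le[of "rot n z" "rot n z" u u]
      term_le[of z z "rot n u" "rot n u"] term_le[of "rot n z" "rot n z" "rot n u" "rot n u"]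
    by (simp add: abs_le_iff)
qed

lemma f_obj_eq_residual_loss:
  "f_obj n m a xn = residual_loss (2*n) m (\<lambda>i. plusv n (a i)) (\<lambda>i. rot n (plusv n (a i)))
     (\<lambda>i. (cmod (cinner n (a i) xn))\<^sup>2)"
  by (rule ext) (simp add: f_obj_def residual_loss_def cmod_cinner_ofplus_sq)

lemma g_obj_eq_quartic_norm_loss:
  "g_obj n m \<sigma> xn = quartic_norm_loss (2*n) (8 * c_const m \<sigma>) (plusv n xn) (rot n (plusv n xn))
     (dot (2*n) (plusv n xn) (plusv n xn))"
proof
  fix y
  have "cnorm n (ofplus n y) ^ 4 = (dot (2*n) y y)\<^sup>2"
    by (simp add: cnorm_ofplus flip: rnorm_sq)
  moreover have "cnorm n xn ^ 4 = (dot (2*n) (plusv n xn) (plusv n xn))\<^sup>2"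
    "(cnorm n xn)\<^sup>2 = dot (2*n) (plusv n xn) (plusv n xn)"
    by (simp_all add: cnorm_ofplus flip: rnorm_sq cnorm_ofplus_plusv[of n xn])
  moreover have "(cmod (cinner n (ofplus n y) xn))\<^sup>2
      = (dot (2*n) (plusv n xn) y)\<^sup>2 + (dot (2*n) (rot n (plusv n xn)) y)\<^sup>2"
    by (simp add: cmod_cinner_commute[of n "ofplus n y"] cmod_cinner_ofplus_sq)
  ultimately show "g_obj n m \<sigma> xn y = quartic_norm_loss (2*n) (8 * c_const m \<sigma>) (plusv n xn) (rot n (plusv n xn))
     (dot (2*n) (plusv n xn) (plusv n xn)) y"
    by (simp add: g_obj_def quartic_norm_loss_def cnorm_ofplus rnorm_sq algebra_simps)
qed

lemma hess_quad_f_obj: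
  assumes "c_const m \<sigma> \<noteq> 0"
  shows "hess_quad (2*n) (f_obj n m a xn) x u
    = c_const m \<sigma> * hess_form n (tensor_apply (2*n) (T_tensor n m a \<sigma>)) x u (plusv n xn)"
proof -
  define p where "p i = plusv n (a i)" for i
  define z where "z = plusv n xn"
  have w: "(cmod (cinner n (a i) xn))\<^sup>2 = (dot (2*n) (p i) z)\<^sup>2 + (dot (2*n) (p i) (rot n z))\<^sup>2" for i
    by (simp add: p_def z_def cmod_cinner_ofplus_sq dot_rot_left flip: cinner_ofplus_plusv[of n "a i" xn])
  have "hess_quad (2*n) (f_obj n m a xn) x u
      = (\<Sum>i<m. hess_form n (\<lambda>v1 v2 v3 v4. dot (2*n) (p i) v1 * dot (2*n) (p i) v2
           * dot (2*n) (p i) v3 * dot (2*n) (p i) v4) x u z)"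
    unfolding f_obj_eq_residual_loss hess_quad_residual_loss w p_def[symmetric]
      hess_form_def Let_def dot_rot_left
    by (intro sum.cong refl) (simp add: power2_eq_square algebra_simps)
  also have "\<dots> = c_const m \<sigma> * hess_form n (tensor_apply (2*n) (T_tensor n m a \<sigma>)) x u z"
    by (simp add: p_def tensor_apply_T_tensor[OF assms] hess_form_sum flip: hess_form_scale)
  finally show ?thesis by (simp add: z_def)
qed

lemma hess_quad_g_obj:
  "hess_quad (2*n) (g_obj n m \<sigma> xn) x u
    = c_const m \<sigma> * hess_form n (tensor_apply (2*n) S_tensor) x u (plusv n xn)"
  unfolding g_obj_eq_quartic_norm_loss hess_quad_quartic_norm_loss hess_form_def Let_def tensor_apply_S_tensor
    dot_rot_left dot_rot_rot_right dot_rot_self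
  by (simp add: power2_eq_square algebra_simps)

lemma abs_hess_quad_diff_le:
  assumes "n > 0" and "c_const m \<sigma> > 0"
  shows "\<bar>hess_quad (2*n) (f_obj n m a xn) x u - hess_quad (2*n) (g_obj n m \<sigma> xn) x u\<bar>
    \<le> 64 * tensor_opnorm (2*n) (\<lambda>i1 i2 i3 i4. T_tensor n m a \<sigma> i1 i2 i3 i4 - S_tensor i1 i2 i3 i4)
       * c_const m \<sigma> * (rnorm (2*n) u)\<^sup>2 * (cnorm n (ofplus n x) + cnorm n xn)\<^sup>2"
proof -
  define R where "R = (\<lambda>i1 i2 i3 i4. T_tensor n m a \<sigma> i1 i2 i3 i4 - S_tensor i1 i2 i3 i4)"
  have "tensor_apply (2*n) R = (\<lambda>v1 v2 v3 v4. tensor_apply (2*n) (T_tensor n m a \<sigma>) v1 v2 v3 v4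
      - tensor_apply (2*n) S_tensor v1 v2 v3 v4)"
    by (intro ext) (simp add: R_def tensor_apply_diff)
  then have "hess_quad (2*n) (f_obj n m a xn) x u - hess_quad (2*n) (g_obj n m \<sigma> xn) x u
      = c_const m \<sigma> * hess_form n (tensor_apply (2*n) R) x u (plusv n xn)"
    using assms(2) by (simp add: hess_quad_f_obj hess_quad_g_obj hess_form_diff right_diff_distrib)
  moreover have "\<bar>hess_form n (tensor_apply (2*n) R) x u (plusv n xn)\<bar>
      \<le> 64 * tensor_opnorm (2*n) R * (rnorm (2*n) u)\<^sup>2 * (rnorm (2*n) x + rnorm (2*n) (plusv n xn))\<^sup>2"
    using assms(1) by (intro abs_hess_form_le abs_tensor_apply_le_opnorm tensor_opnorm_nonneg) simp
  ultimately show ?thesis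
    using assms(2) by (simp add: R_def abs_mult cnorm_ofplus mult_ac flip: cnorm_ofplus_plusv[of n xn])
qed

theorem proposition4:
  shows "\<exists>C2 :: real. C2 > 0 \<and>
    (\<forall>\<delta>0 :: real. \<delta>0 > 0 \<longrightarrow>
      (\<forall>(n::nat) (m::nat) (a :: nat \<Rightarrow> nat \<Rightarrow> complex) (xn :: nat \<Rightarrow> complex) (\<sigma>::real).
         n \<ge> 1 \<longrightarrow> m \<ge> 1 \<longrightarrow> (\<exists>j<n. xn j \<noteq> 0) \<longrightarrow> \<sigma> > 0 \<longrightarrow>
         tensor_opnorm (2*n) (\<lambda>i1 i2 i3 i4. T_tensor n m a \<sigma> i1 i2 i3 i4 - S_tensor i1 i2 i3 i4)
           < \<delta>0 \<longrightarrow>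
         (\<forall>(xp :: nat \<Rightarrow> real) (u :: nat \<Rightarrow> real).
            (\<forall>k\<ge>2*n. xp k = 0) \<longrightarrow> (\<forall>k\<ge>2*n. u k = 0) \<longrightarrow> (\<exists>k<2*n. u k \<noteq> 0) \<longrightarrow>
            \<bar>hess_quad (2*n) (f_obj n m a xn) xp u - hess_quad (2*n) (g_obj n m \<sigma> xn) xp u\<bar>
              < C2 * \<delta>0 * c_const m \<sigma> * (rnorm (2*n) u)\<^sup>2
                * (cnorm n (ofplus n xp) + cnorm n xn)\<^sup>2)))"
proof (intro exI[of _ 64] conjI allI impI)
  fix \<delta>0 \<sigma> :: real and n m :: nat and a :: "nat \<Rightarrow> nat \<Rightarrow> complex" and xn :: "nat \<Rightarrow> complex"
    and xp u :: "nat \<Rightarrow> real"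
  assume "n \<ge> 1" "m \<ge> 1" "\<exists>j<n. xn j \<noteq> 0" "\<sigma> > 0" "\<exists>k<2*n. u k \<noteq> 0"
    and opnorm_less:
      "tensor_opnorm (2*n) (\<lambda>i1 i2 i3 i4. T_tensor n m a \<sigma> i1 i2 i3 i4 - S_tensor i1 i2 i3 i4) < \<delta>0"
  have c_pos: "c_const m \<sigma> > 0"
    using \<open>m \<ge> 1\<close> \<open>\<sigma> > 0\<close> by (simp add: c_const_def)
  define B where "B = c_const m \<sigma> * (rnorm (2*n) u)\<^sup>2 * (cnorm n (ofplus n xp) + cnorm n xn)\<^sup>2"
  have "rnorm (2*n) u > 0"
    using \<open>\<exists>k<2*n. u k \<noteq> 0\<close> by (rule rnorm_pos)
  moreover have "cnorm n (ofplus n xp) + cnorm n xn > 0"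
    using cnorm_pos[OF \<open>\<exists>j<n. xn j \<noteq> 0\<close>] rnorm_nonneg[of "2*n" xp] by (simp add: cnorm_ofplus)
  ultimately have "B > 0"
    using c_pos by (simp add: B_def)
  have "\<bar>hess_quad (2*n) (f_obj n m a xn) xp u - hess_quad (2*n) (g_obj n m \<sigma> xn) xp u\<bar>
      \<le> 64 * tensor_opnorm (2*n) (\<lambda>i1 i2 i3 i4. T_tensor n m a \<sigma> i1 i2 i3 i4 - S_tensor i1 i2 i3 i4) * B"
    using abs_hess_quad_diff_le[of n m \<sigma> a xn xp u] c_pos \<open>n \<ge> 1\<close> by (simp add: B_def mult_ac)
  also have "\<dots> < 64 * \<delta>0 * B"
    using opnorm_less \<open>B > 0\<close> by simp
  finally show "\<bar>hess_quad (2*n) (f_obj n m a xn) xp u - hess_quad (2*n) (g_obj n m \<sigma> xn) xp u\<bar>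
      < 64 * \<delta>0 * c_const m \<sigma> * (rnorm (2*n) u)\<^sup>2 * (cnorm n (ofplus n xp) + cnorm n xn)\<^sup>2"
    by (simp add: B_def mult_ac)
qed simp

end
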